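(* Let $F\subsetneq K$ be fields of characteristic $0$, with $F$ a proper nonempty subfield of $K$. Let $p(x)=\sum_{k=0}^{n}a_k x^k\in K[x]$ be non-constant with $a_n\neq 0$, and let $q(x)=\sum_{j=0}^{m}b_j x^j\in K[x]\setminus F[x]$ with $b_m\neq 0$ and $b_m\in F$. If $b_j\notin F$ for some $j\geq 1$, then $p\circ q\notin F[x]$.
   Context: $F[x]$ denotes the set of polynomials with all coefficients in $F$. *)

theory Defs
  imports "HOL-Computational_Algebra.Polynomial"
begin

definition is_subfield :: "'a::field set \<Rightarrow> bool" where
  "is_subfield F \<longleftrightarrow> 0 \<in> F \<and> 1 \<in> F \<and>
     (\<forall>x\<in>F. \<forall>y\<in>F. x + y \<in> F \<and> x * y \<in> F) \<and>
     (\<forall>x\<in>F. - x \<in> F) \<and> (\<forall>x\<in>F. x \<noteq> 0 \<longrightarrow> inverse x \<in> F)"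

definition poly_over :: "'a::zero set \<Rightarrow> 'a poly \<Rightarrow> bool" where
  "poly_over F p \<longleftrightarrow> (\<forall>i. coeff p i \<in> F)"

end

theory Submission
  imports Defs
begin

(* Let j be the largest index j >= 1 with b_j not in F. Since b_m is in F, j < m, and
   q = A + C where A collects the terms of degree > j (so A is in F[x]) and C has degree j.
   Only the top term a_n q^n of p(q) reaches degree (n-1)m + j, and there
   q^n - A^n = C * (sum of A^(n-1-i) q^i for i < n), whose second factor has degree (n-1)m
   and top coefficient n b_m^(n-1). So the coefficient of x^((n-1)m+j) in p(q) is
   a_n (c + n b_m^(n-1) b_j) with c in F. Comparing leading coefficients gives a_n in F,
   and in characteristic 0 this forces b_j into F. *)

lemma subfield_sum:
  assumes "is_subfield F" "\<And>i. i \<in> A \<Longrightarrow> f i \<in> F"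
  shows "sum f A \<in> F"
  using assms(2)
  by (induction A rule: infinite_finite_induct) (use assms(1) in \<open>auto simp: is_subfield_def\<close>)

lemma subfield_power:
  assumes "is_subfield F" "x \<in> F"
  shows "x ^ n \<in> F"
  using assms by (induction n) (auto simp: is_subfield_def)

lemma subfield_of_nat:
  assumes "is_subfield F"
  shows "of_nat n \<in> F"
  using assms by (induction n) (auto simp: is_subfield_def)

lemma subfield_diff:
  assumes "is_subfield F" "x \<in> F" "y \<in> F"
  shows "x - y \<in> F"
  using assms unfolding is_subfield_def by (metis diff_conv_add_uminus)

lemma subfield_mult_cancel_left:
  assumes "is_subfield F" "x \<in> F" "x \<noteq> 0" "x * y \<in> F"
  shows "y \<in> F"
proof -
  have "inverse x * (x * y) \<in> F"
    using assms by (simp add: is_subfield_def)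
  then show ?thesis
    using \<open>x \<noteq> 0\<close> by (simp add: field_simps)
qed

lemma poly_over_mult:
  assumes "is_subfield F" "poly_over F p" "poly_over F q"
  shows "poly_over F (p * q)"
  using assms unfolding poly_over_def coeff_mult
  by (auto intro!: subfield_sum simp: is_subfield_def)

lemma poly_over_power:
  assumes "is_subfield F" "poly_over F p"
  shows "poly_over F (p ^ n)"
proof (induction n)
  case 0
  show ?case
    using assms(1) by (simp add: poly_over_def is_subfield_def)
next
  case (Suc n)
  then show ?case
    using assms poly_over_mult by simp
qed

lemma coeff_mult_at_degree_bounds:
  assumes "degree p \<le> i" "degree q \<le> k"
  shows "coeff (p * q) (i + k) = coeff p i * coeff q k"
proof (cases "degree p = i \<and> degree q = k")
  case True
  then show ?thesis by (metis coeff_mult_degree_sum)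
next
  case False
  then have "degree (p * q) < i + k" and "coeff p i * coeff q k = 0"
    using assms degree_mult_le[of p q] by (auto simp: coeff_eq_0)
  then show ?thesis by (simp add: coeff_eq_0)
qed

lemma coeff_power_degree_mult: "coeff (p ^ k) (degree p * k) = lead_coeff p ^ k"
proof (induction k)
  case (Suc k)
  have "coeff (p * p ^ k) (degree p + degree p * k) = lead_coeff p * coeff (p ^ k) (degree p * k)"
    by (intro coeff_mult_at_degree_bounds order_refl degree_power_le)
  with Suc show ?case by simp
qed simp

lemma coeff_power_add_lower_degree:
  fixes A C :: "'a::idom poly" and n :: nat
  assumes "degree C < degree A"
  defines "d \<equiv> degree A * (n - 1) + degree C"
  shows "coeff ((A + C) ^ n) d
           = coeff (A ^ n) d + of_nat n * lead_coeff A ^ (n - 1) * lead_coeff C"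
proof -
  define G where "G = (\<Sum>i<n. A ^ (n - Suc i) * (A + C) ^ i)"
  have deg_sum: "degree (A + C) = degree A" and lead_sum: "lead_coeff (A + C) = lead_coeff A"
    using assms(1) by (simp_all add: degree_add_eq_left coeff_eq_0)
  have split_exp: "degree A * (n - 1) = degree A * (n - Suc i) + degree (A + C) * i" if "i < n" for i
    using that by (simp add: deg_sum add_mult_distrib2[symmetric])
  have deg_term: "degree (A ^ (n - Suc i) * (A + C) ^ i) \<le> degree A * (n - 1)" if "i < n" for i
    unfolding split_exp[OF that]
    using add_mono[OF degree_power_le degree_power_le] by (rule order_trans[OF degree_mult_le])
  have coeff_term: "coeff (A ^ (n - Suc i) * (A + C) ^ i) (degree A * (n - 1)) = lead_coeff A ^ (n - 1)"
    if "i < n" for i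
    unfolding split_exp[OF that] coeff_mult_at_degree_bounds[OF degree_power_le degree_power_le]
    using that by (simp add: coeff_power_degree_mult lead_sum del: coeff_add flip: power_add)
  have "(A + C) ^ n = A ^ n + C * G"
    unfolding G_def using power_diff_sumr2[of "A + C" n A] by (simp add: algebra_simps)
  moreover have "degree G \<le> degree A * (n - 1)"
    unfolding G_def using deg_term by (intro degree_sum_le) auto
  then have "coeff (C * G) d = lead_coeff C * coeff G (degree A * (n - 1))"
    unfolding d_def add.commute[of _ "degree C"] by (rule coeff_mult_at_degree_bounds[OF order_refl])
  moreover have "coeff G (degree A * (n - 1)) = of_nat n * lead_coeff A ^ (n - 1)"
    unfolding G_def coeff_sum using coeff_term by simp
  ultimately show ?thesis
    by (simp add: mult_ac)
qed

lemma pcompose_monom: "pcompose (monom a n) q = smult a (q ^ n)"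
  for q :: "'a::comm_semiring_1 poly"
  by (induction n) (simp_all add: monom_0 monom_Suc pcompose_pCons algebra_simps)

lemma coeff_pcompose_above_lower_powers:
  fixes p q :: "'a::comm_semiring_1 poly"
  assumes "degree q * (degree p - 1) < d"
  shows "coeff (pcompose p q) d = lead_coeff p * coeff (q ^ degree p) d"
proof -
  have "pcompose p q = (\<Sum>i\<le>degree p. smult (coeff p i) (q ^ i))"
    by (subst (1) poly_as_sum_of_monoms[symmetric]) (simp add: pcompose_sum pcompose_monom)
  then have "coeff (pcompose p q) d = (\<Sum>i<Suc (degree p). coeff p i * coeff (q ^ i) d)"
    by (simp add: coeff_sum lessThan_Suc_atMost)
  moreover have "coeff (q ^ i) d = 0" if "i < degree p" for i
  proof -
    have "degree (q ^ i) \<le> degree q * (degree p - 1)"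
      using that by (intro order_trans[OF degree_power_le] mult_le_mono2) simp
    then show ?thesis
      using assms by (simp add: coeff_eq_0)
  qed
  ultimately show ?thesis
    by simp
qed

lemma greatest_coeff_not_in:
  fixes q :: "'a::zero poly"
  assumes "0 \<in> F" "coeff q j \<notin> F"
  obtains k where "j \<le> k" "coeff q k \<notin> F" "\<And>i. k < i \<Longrightarrow> coeff q i \<in> F"
proof
  have bounded: "i \<le> degree q" if "coeff q i \<notin> F" for i
    using assms(1) that by (auto intro: le_degree)
  define k where "k = (GREATEST i. coeff q i \<notin> F)"
  show "j \<le> k"
    unfolding k_def using assms(2) bounded by (rule Greatest_le_nat)
  show "coeff q k \<notin> F"
    unfolding k_def using assms(2) bounded by (rule GreatestI_nat)
  show "coeff q i \<in> F" if "k < i" for i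
    using Greatest_le_nat[of "\<lambda>i. coeff q i \<notin> F" i, OF _ bounded] that unfolding k_def by auto
qed

lemma coeff_pcompose_via_high_part:
  fixes p q :: "'a::idom poly"
  assumes "0 < j" "j < degree q" "coeff q j \<noteq> 0"
  defines "A \<equiv> q - poly_cutoff (Suc j) q"
    and "d \<equiv> degree q * (degree p - 1) + j"
  shows "coeff (pcompose p q) d = lead_coeff p *
           (coeff (A ^ degree p) d + of_nat (degree p) * lead_coeff q ^ (degree p - 1) * coeff q j)"
proof -
  define C where "C = poly_cutoff (Suc j) q"
  have coeff_C: "coeff C i = (if i \<le> j then coeff q i else 0)" for i
    unfolding C_def coeff_poly_cutoff by simp
  have coeff_A: "coeff A i = (if i \<le> j then 0 else coeff q i)" for i
    unfolding A_def C_def[symmetric] using coeff_C by simp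
  have deg_C: "degree C = j"
    using assms(3) coeff_C by (intro antisym degree_le le_degree) auto
  have deg_A: "degree A = degree q"
    using assms(2) coeff_A by (intro antisym degree_le le_degree) (auto simp: coeff_eq_0)
  have "coeff (pcompose p q) d = lead_coeff p * coeff ((A + C) ^ degree p) d"
    unfolding A_def C_def d_def using assms(1) by (simp add: coeff_pcompose_above_lower_powers)
  also have "\<dots> = lead_coeff p * (coeff (A ^ degree p) d
                    + of_nat (degree p) * lead_coeff A ^ (degree p - 1) * lead_coeff C)"
    using coeff_power_add_lower_degree[of C A "degree p"] assms(2)
    by (simp add: d_def deg_A deg_C)
  finally show ?thesis
    using assms(2) by (simp add: deg_A deg_C coeff_A coeff_C)
qed

lemma lead_coeff_in_subfield_if_pcompose:
  assumes "is_subfield F" "poly_over F (pcompose p q)" "lead_coeff q \<in> F" "0 < degree q"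
  shows "lead_coeff p \<in> F"
proof (rule subfield_mult_cancel_left[OF assms(1)])
  show "lead_coeff q ^ degree p \<in> F" "lead_coeff q ^ degree p \<noteq> 0"
    using assms by (auto intro: subfield_power)
  have "lead_coeff (pcompose p q) \<in> F"
    using assms(2) by (simp add: poly_over_def)
  then show "lead_coeff q ^ degree p * lead_coeff p \<in> F"
    using lead_coeff_comp[OF assms(4), of p] by (simp add: mult.commute)
qed

lemma coeff_in_subfield_if_pcompose:
  fixes p q :: "'a::field_char_0 poly"
  assumes F: "is_subfield F" and comp: "poly_over F (pcompose p q)"
    and "0 < degree p" "lead_coeff q \<in> F"
    and "0 < j" "j < degree q" and above: "\<And>i. j < i \<Longrightarrow> coeff q i \<in> F"
  shows "coeff q j \<in> F"
proof (cases "coeff q j = 0")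
  case True
  then show ?thesis
    using F by (simp add: is_subfield_def)
next
  case False
  define n A d X where "n = degree p" and "A = q - poly_cutoff (Suc j) q"
    and "d = degree q * (n - 1) + j" and "X = of_nat n * lead_coeff q ^ (n - 1)"
  have "poly_over F A"
    using above F by (simp add: poly_over_def A_def coeff_poly_cutoff is_subfield_def)
  then have A_pow: "coeff (A ^ n) d \<in> F"
    using F poly_over_power poly_over_def by blast
  have "coeff (pcompose p q) d = lead_coeff p * (coeff (A ^ n) d + X * coeff q j)"
    unfolding n_def d_def A_def X_def using False assms(5,6)
    by (intro coeff_pcompose_via_high_part) auto
  moreover have "lead_coeff p \<in> F" "lead_coeff p \<noteq> 0"
    using lead_coeff_in_subfield_if_pcompose[OF F comp assms(4)] assms(3,6) by auto
  ultimately have "coeff (A ^ n) d + X * coeff q j \<in> F"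
    using comp subfield_mult_cancel_left[OF F] by (metis poly_over_def)
  then have "X * coeff q j \<in> F"
    using subfield_diff[OF F _ A_pow] by fastforce
  moreover have "X \<in> F" "X \<noteq> 0"
    using assms(3,4,6) F by (auto simp: X_def n_def is_subfield_def subfield_of_nat subfield_power)
  ultimately show ?thesis
    using subfield_mult_cancel_left[OF F] by blast
qed

theorem proposition11:
  fixes F :: "'a::field_char_0 set" and p q :: "'a poly"
  assumes "is_subfield F" and "F \<noteq> UNIV"
    and "degree p \<ge> 1"
    and "\<not> poly_over F q"
    and "lead_coeff q \<in> F"
    and "\<exists>j\<ge>1. coeff q j \<notin> F"
  shows "\<not> poly_over F (pcompose p q)"
proof
  assume comp: "poly_over F (pcompose p q)"
  have zero: "0 \<in> F"
    using assms(1) by (simp add: is_subfield_def)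
  obtain j where "1 \<le> j" and j_notin: "coeff q j \<notin> F"
    and above: "\<And>i. j < i \<Longrightarrow> coeff q i \<in> F"
    using assms(6) greatest_coeff_not_in[OF zero] by (metis order_trans)
  have "j < degree q"
    using j_notin zero assms(5) by (metis le_degree le_neq_implies_less)
  then have "coeff q j \<in> F"
    using coeff_in_subfield_if_pcompose[OF assms(1) comp _ assms(5) _ _ above] assms(3) \<open>1 \<le> j\<close>
    by simp
  with j_notin show False ..
qed

end
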